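(* Let $f,g:\mathbb R\to\mathbb R$ be two convex functions. Define $\psi:\mathbb R\to(-\infty,\infty]$ by $\psi=g-(g-f)^c$. Then $\psi$ is convex.
   Context: For $h:\mathbb R\to(-\infty,\infty)$, $h^c$ denotes the largest convex function lying below $h$ (the convex hull). It may be identically $-\infty$; a function identically equal to $-\infty$ or $+\infty$ is deemed convex. *)

theory Defs
  imports "HOL-Analysis.Analysis" "HOL-Library.Extended_Real"
begin

text \<open>Convexity of an extended-real valued function on the real line, via convexity
  of its epigraph (the standard convention; the constants +infinity and -infinity are
  convex).\<close>
definition econvex :: "(real \<Rightarrow> ereal) \<Rightarrow> bool" where
  "econvex \<phi> \<longleftrightarrow> convex {(x, t::real). \<phi> x \<le> ereal t}"

text \<open>The convex hull h^c of h: the largest convex function lying below h, i.e. the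
  pointwise supremum of all convex minorants of h (possibly identically -infinity).\<close>
definition convex_minorant :: "(real \<Rightarrow> real) \<Rightarrow> real \<Rightarrow> ereal" where
  "convex_minorant h = (\<lambda>x. SUP \<phi> \<in> {\<phi>. econvex \<phi> \<and> (\<forall>y. \<phi> y \<le> ereal (h y))}. \<phi> x)"

end

theory Submission
  imports Defs
begin

text \<open>Let \<open>k = (g - f)\<^sup>c\<close>. A convex function on the line that is nowhere \<open>+\<infinity>\<close> and
  \<open>-\<infinity>\<close> at one point is \<open>-\<infinity>\<close> everywhere; then \<open>\<psi> = +\<infinity>\<close>. Otherwise \<open>k\<close> is a real
  convex function and \<open>\<psi> = g - k \<ge> f\<close>. Let \<open>\<ell>\<close> be affine with \<open>\<psi> \<le> \<ell>\<close> at \<open>y < w\<close>. Then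
  \<open>c = g - \<ell>\<close> is convex, \<open>c \<le> k\<close> at \<open>y\<close> and \<open>w\<close>, and \<open>c \<le> g - f\<close> on \<open>[y, w]\<close> because the
  convex \<open>f\<close> lies below \<open>\<ell>\<close> there. Replacing \<open>k\<close> by \<open>max k c\<close> on \<open>[y, w]\<close> keeps it
  convex, so maximality of \<open>k\<close> gives \<open>c \<le> k\<close>, i.e. \<open>\<psi> \<le> \<ell>\<close>, on all of \<open>[y, w]\<close>: \<open>\<psi>\<close> lies
  below its chords.\<close>

lemma affine_through_two_points:
  fixes a b u v :: real
  assumes "a \<noteq> b"
  obtains \<alpha> \<beta> where "\<alpha> + \<beta> * a = u" and "\<alpha> + \<beta> * b = v"
proof
  define \<beta> where "\<beta> = (v - u) / (b - a)"
  show "(u - \<beta> * a) + \<beta> * a = u" by simp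
  have "\<beta> * (b - a) = v - u" using assms by (simp add: \<beta>_def)
  then show "(u - \<beta> * a) + \<beta> * b = v" by (simp add: algebra_simps)
qed

lemma concave_on_affine: "convex S \<Longrightarrow> concave_on S (\<lambda>t::real. \<alpha> + \<beta> * t)"
  by (rule concave_on_linorderI) (simp_all add: algebra_simps)

lemma convex_on_le_affine:
  fixes F :: "real \<Rightarrow> real"
  assumes F: "convex_on S F" and S: "a \<in> S" "b \<in> S" and t: "t \<in> {a..b}"
    and Fa: "F a \<le> \<alpha> + \<beta> * a" and Fb: "F b \<le> \<alpha> + \<beta> * b"
  shows "F t \<le> \<alpha> + \<beta> * t"
proof (cases "a = b")
  case True
  then show ?thesis using t Fa by simp
next
  case False
  with t have ab: "a < b" by simp
  define s where "s = (t - a) / (b - a)"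
  have s: "0 \<le> s" "s \<le> 1" using t ab by (auto simp: s_def field_simps)
  have "s * (b - a) = t - a" using ab by (simp add: s_def)
  then have t_eq: "t = (1 - s) *\<^sub>R a + s *\<^sub>R b" by (simp add: algebra_simps)
  have "F t \<le> (1 - s) * F a + s * F b"
    unfolding t_eq using s S by (rule convex_onD[OF F])
  also have "\<dots> \<le> (1 - s) * (\<alpha> + \<beta> * a) + s * (\<alpha> + \<beta> * b)"
    using s Fa Fb by (intro add_mono mult_left_mono) auto
  also have "\<dots> = \<alpha> + \<beta> * t" by (simp add: t_eq algebra_simps)
  finally show ?thesis .
qed

lemma convex_on_le_affineI:
  fixes F :: "real \<Rightarrow> real"
  assumes "convex S"
    and below: "\<And>a b t \<alpha> \<beta>. a \<in> S \<Longrightarrow> b \<in> S \<Longrightarrow> a < t \<Longrightarrow> t < b \<Longrightarrow>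
      F a \<le> \<alpha> + \<beta> * a \<Longrightarrow> F b \<le> \<alpha> + \<beta> * b \<Longrightarrow> F t \<le> \<alpha> + \<beta> * t"
  shows "convex_on S F"
proof (rule convex_on_linorderI[OF _ \<open>convex S\<close>])
  fix s x y :: real
  assume s: "0 < s" "s < 1" and S: "x \<in> S" "y \<in> S" and xy: "x < y"
  obtain \<alpha> \<beta> where Fx: "\<alpha> + \<beta> * x = F x" and Fy: "\<alpha> + \<beta> * y = F y"
    by (rule affine_through_two_points[of x y]) (use xy in auto)
  define t where "t = (1 - s) * x + s * y"
  have "t - x = s * (y - x)" by (simp add: t_def algebra_simps)
  moreover have "0 < s * (y - x)" using s xy by simp
  ultimately have xt: "x < t" by linarith
  have "y - t = (1 - s) * (y - x)" by (simp add: t_def algebra_simps)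
  moreover have "0 < (1 - s) * (y - x)" using s xy by simp
  ultimately have ty: "t < y" by linarith
  have "F t \<le> \<alpha> + \<beta> * t"
    using below[OF S xt ty] Fx Fy by simp
  also have "\<dots> = (1 - s) * (\<alpha> + \<beta> * x) + s * (\<alpha> + \<beta> * y)"
    by (simp add: t_def algebra_simps)
  finally show "F ((1 - s) *\<^sub>R x + s *\<^sub>R y) \<le> (1 - s) * F x + s * F y"
    by (simp add: t_def Fx Fy)
qed

lemma convex_on_glue_max:
  fixes k c :: "real \<Rightarrow> real"
  assumes k: "convex_on UNIV k" and c: "convex_on UNIV c"
    and ca: "c a \<le> k a" and cb: "c b \<le> k b"
  shows "convex_on UNIV (\<lambda>t. if t \<in> {a..b} then max (k t) (c t) else k t)"
    (is "convex_on UNIV ?P")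
proof (rule convex_on_le_affineI[OF convex_UNIV])
  fix y w z \<alpha> \<beta> :: real
  assume yz: "y < z" and zw: "z < w"
    and Py: "?P y \<le> \<alpha> + \<beta> * y" and Pw: "?P w \<le> \<alpha> + \<beta> * w"
  have k_le: "k t \<le> \<alpha> + \<beta> * t" if "t \<in> {y..w}" for t
  proof (rule convex_on_le_affine[OF k UNIV_I UNIV_I that])
    show "k y \<le> \<alpha> + \<beta> * y" "k w \<le> \<alpha> + \<beta> * w"
      using Py Pw by (auto split: if_splits)
  qed
  have c_le: "c z \<le> \<alpha> + \<beta> * z" if z: "z \<in> {a..b}"
  proof -
    define p q where "p = max a y" and "q = min b w"
    have "c p \<le> \<alpha> + \<beta> * p"
    proof (cases "a \<le> y")
      case True
      then show ?thesis using Py z yz by (auto simp: p_def)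
    next
      case False
      then show ?thesis using ca k_le[of a] z zw by (auto simp: p_def)
    qed
    moreover have "c q \<le> \<alpha> + \<beta> * q"
    proof (cases "w \<le> b")
      case True
      then show ?thesis using Pw z zw by (auto simp: q_def)
    next
      case False
      then show ?thesis using cb k_le[of b] z yz by (auto simp: q_def)
    qed
    moreover have "z \<in> {p..q}" using z yz zw by (simp add: p_def q_def)
    ultimately show ?thesis
      using convex_on_le_affine[OF c UNIV_I UNIV_I] by blast
  qed
  show "?P z \<le> \<alpha> + \<beta> * z"
    using k_le[of z] c_le yz zw by auto
qed

lemma convex_on_diff_greatest_convex_minorant:
  fixes f g k :: "real \<Rightarrow> real"
  assumes f: "convex_on UNIV f" and g: "convex_on UNIV g" and k: "convex_on UNIV k"
    and k_le: "\<And>x. k x \<le> g x - f x"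
    and k_greatest: "\<And>\<phi> x. convex_on UNIV \<phi> \<Longrightarrow> (\<And>y. \<phi> y \<le> g y - f y) \<Longrightarrow> \<phi> x \<le> k x"
  shows "convex_on UNIV (\<lambda>x. g x - k x)"
proof (rule convex_on_le_affineI[OF convex_UNIV])
  fix y w z \<alpha> \<beta> :: real
  assume yz: "y < z" and zw: "z < w"
    and \<psi>y: "g y - k y \<le> \<alpha> + \<beta> * y" and \<psi>w: "g w - k w \<le> \<alpha> + \<beta> * w"
  define c where "c t = g t - (\<alpha> + \<beta> * t)" for t
  have c_convex: "convex_on UNIV c"
    unfolding c_def by (intro convex_on_diff g concave_on_affine convex_UNIV)
  have fy: "f y \<le> \<alpha> + \<beta> * y" and fw: "f w \<le> \<alpha> + \<beta> * w"
    using \<psi>y \<psi>w k_le[of y] k_le[of w] by auto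
  have c_le: "c t \<le> g t - f t" if "t \<in> {y..w}" for t
    using convex_on_le_affine[OF f UNIV_I UNIV_I that fy fw] by (simp add: c_def)
  define P where "P t = (if t \<in> {y..w} then max (k t) (c t) else k t)" for t
  have "convex_on UNIV P"
    unfolding P_def using \<psi>y \<psi>w by (intro convex_on_glue_max k c_convex) (auto simp: c_def)
  moreover have "P t \<le> g t - f t" for t
    using k_le[of t] c_le[of t] by (auto simp: P_def)
  ultimately have "P z \<le> k z" by (rule k_greatest)
  then show "g z - k z \<le> \<alpha> + \<beta> * z"
    using yz zw by (auto simp: P_def c_def)
qed

lemma econvex_ereal_iff: "econvex (\<lambda>x. ereal (F x)) \<longleftrightarrow> convex_on UNIV F"
proof -
  have "{(x, t). ereal (F x) \<le> ereal t} = epigraph UNIV F" by (auto simp: epigraph_def)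
  then show ?thesis by (simp add: econvex_def convex_epigraph)
qed

lemma econvex_convex_minorant: "econvex (convex_minorant h)"
proof -
  let ?S = "{\<phi>. econvex \<phi> \<and> (\<forall>y. \<phi> y \<le> ereal (h y))}"
  have "{(x, t). convex_minorant h x \<le> ereal t} = (\<Inter>\<phi>\<in>?S. {(x, t). \<phi> x \<le> ereal t})"
    by (auto simp: convex_minorant_def SUP_le_iff)
  moreover have "convex (\<Inter>\<phi>\<in>?S. {(x, t). \<phi> x \<le> ereal t})"
    by (rule convex_INT) (auto simp: econvex_def)
  ultimately show ?thesis by (simp add: econvex_def)
qed

lemma convex_minorant_le: "convex_minorant h x \<le> ereal (h x)"
  by (auto simp: convex_minorant_def SUP_le_iff)

lemma convex_minorant_greatest:
  assumes "convex_on UNIV \<phi>" and "\<And>y. \<phi> y \<le> h y"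
  shows "ereal (\<phi> x) \<le> convex_minorant h x"
  unfolding convex_minorant_def using assms
  by (intro SUP_upper2[where i="\<lambda>x. ereal (\<phi> x)"]) (auto simp: econvex_ereal_iff)

lemma econvex_MInfty_everywhere:
  assumes H: "econvex H" and finite: "\<And>x. H x \<noteq> \<infinity>" and x0: "H x0 = -\<infinity>"
  shows "H x = -\<infinity>"
proof (rule ereal_bot)
  fix B
  define z where "z = 2 * x - x0"
  obtain r where r: "H z \<le> ereal r"
    using finite[of z] by (cases "H z") auto
  let ?E = "{(x, t). H x \<le> ereal t}"
  have "(x0, 2 * B - r) \<in> ?E" "(z, r) \<in> ?E" using x0 r by auto
  then have "(1/2) *\<^sub>R (x0, 2 * B - r) + (1/2) *\<^sub>R (z, r) \<in> ?E"
    using H unfolding econvex_def by (intro convexD) auto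
  moreover have "(1/2) *\<^sub>R (x0, 2 * B - r) + (1/2) *\<^sub>R (z, r) = (x, B)"
    by (simp add: z_def algebra_simps)
  ultimately show "H x \<le> ereal B" by simp
qed

lemma convex_minorant_MInfty:
  assumes "convex_minorant h x0 = -\<infinity>"
  shows "convex_minorant h = (\<lambda>_. -\<infinity>)"
proof
  fix x
  have "convex_minorant h y \<noteq> \<infinity>" for y
    using convex_minorant_le[of h y] by auto
  then show "convex_minorant h x = -\<infinity>"
    using econvex_MInfty_everywhere[OF econvex_convex_minorant] assms by blast
qed

lemma convex_minorant_real:
  assumes "\<And>x. convex_minorant h x \<noteq> -\<infinity>"
  obtains k where "convex_minorant h = (\<lambda>x. ereal (k x))" and "convex_on UNIV k"
    and "\<And>x. k x \<le> h x"
    and "\<And>\<phi> x. convex_on UNIV \<phi> \<Longrightarrow> (\<And>y. \<phi> y \<le> h y) \<Longrightarrow> \<phi> x \<le> k x"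
proof
  define k where "k x = real_of_ereal (convex_minorant h x)" for x
  have "convex_minorant h x = ereal (k x)" for x
    using assms[of x] convex_minorant_le[of h x]
    by (cases "convex_minorant h x") (auto simp: k_def)
  then show H_eq: "convex_minorant h = (\<lambda>x. ereal (k x))" by (simp add: fun_eq_iff)
  show "convex_on UNIV k"
    using econvex_convex_minorant[of h] by (simp add: H_eq econvex_ereal_iff)
  show "k x \<le> h x" for x
    using convex_minorant_le[of h x] by (simp add: H_eq)
  show "\<phi> x \<le> k x" if "convex_on UNIV \<phi>" "\<And>y. \<phi> y \<le> h y" for \<phi> x
    using convex_minorant_greatest[OF that] by (simp add: H_eq)
qed

theorem lemma2p2:
  fixes f g :: "real \<Rightarrow> real"
  assumes "convex_on UNIV f" and "convex_on UNIV g"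
  shows "econvex (\<lambda>x. ereal (g x) - convex_minorant (\<lambda>y. g y - f y) x)"
proof (cases "\<exists>x0. convex_minorant (\<lambda>y. g y - f y) x0 = -\<infinity>")
  case True
  then have "convex_minorant (\<lambda>y. g y - f y) = (\<lambda>_. -\<infinity>)"
    using convex_minorant_MInfty by blast
  then show ?thesis by (simp add: econvex_def)
next
  case False
  obtain k where H_eq: "convex_minorant (\<lambda>y. g y - f y) = (\<lambda>x. ereal (k x))"
    and k: "convex_on UNIV k" and k_le: "\<And>x. k x \<le> g x - f x"
    and k_greatest: "\<And>\<phi> x. convex_on UNIV \<phi> \<Longrightarrow> (\<And>y. \<phi> y \<le> g y - f y) \<Longrightarrow> \<phi> x \<le> k x"
    by (rule convex_minorant_real) (use False in auto)
  have "convex_on UNIV (\<lambda>x. g x - k x)"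
    using assms k k_le k_greatest by (rule convex_on_diff_greatest_convex_minorant)
  then show ?thesis by (simp add: H_eq flip: econvex_ereal_iff)
qed

end
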